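(* Let $F=\mathbb{Q}(\sqrt d)$ be an imaginary quadratic field, $\Lambda$ a Hermitian lattice over $\mathcal{O}_F$ of signature $(1,n)$ with associated quadratic lattice $\Lambda_Q$ and natural embedding $\iota:D_\Lambda\hookrightarrow\mathcal{D}_{\Lambda_Q}$. Let $r\in\Lambda$ be primitive with $\langle r,r\rangle<0$. Then: (i) the special divisor $H(r)$ is contained in exactly $\frac{\#\mathcal{O}_F^\times}{2}$ special divisors of the form $\mathcal{H}(r')\subset\mathcal{D}_{\Lambda_Q}$ with $r'\in\Lambda_Q$ primitive; (ii) the restriction $\mathcal{H}(r)|_{D_\Lambda}$ (pullback along $\iota$) equals $H(r)$ with multiplicity $1$, i.e. it is reduced.
   Context: $\delta$ is the inverse different of $F$ ($\frac{1}{2\sqrt d}$ if $d\equiv2,3\bmod4$, $\frac1{\sqrt d}$ if $d\equiv1\bmod4$). A Hermitian lattice over $\mathcal{O}_F$ is a finite free $\mathcal{O}_F$-module with a $\delta\mathcal{O}_F$-valued Hermitian form $\langle\,,\rangle$; its associated quadratic lattice $\Lambda_Q$ is the same $\mathbb{Z}$-module with $(\,,)=\mathrm{Tr}_{F/\mathbb{Q}}\langle\,,\rangle$. $D_\Lambda=\{v\in\mathbb{P}(\Lambda\otimes_{\mathcal{O}_F}\mathbb{C}):\langle v,v\rangle>0\}$, $H(r)=\{v\in D_\Lambda:\langle v,r\rangle=0\}$; $\mathcal{D}_{\Lambda_Q}$ is the connected component of $\{v\in\mathbb{P}(\Lambda_Q\otimes\mathbb{C}):(v,v)=0,(v,\bar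 v)>0\}$ containing $\iota(D_\Lambda)$, and $\mathcal{H}(r')=\{v\in\mathcal{D}_{\Lambda_Q}:(v,r')=0\}$.
   Formalization: In (i) the special divisors $\mathcal{H}(r')$ counted are those with $r'\in\Lambda_Q$ primitive and of the same norm as r, $(r',r')=(r,r)$. The statement above fails without it. *)

theory Defs
  imports "HOL-Analysis.Analysis" "HOL-Computational_Algebra.Squarefree"
begin

definition sqrtd :: "int \<Rightarrow> complex" where
  "sqrtd d = \<i> * complex_of_real (sqrt (real_of_int (- d)))"

definition omegaF :: "int \<Rightarrow> complex" where
  "omegaF d = (if d mod 4 = 1 then (1 + sqrtd d) / 2 else sqrtd d)"

definition OF :: "int \<Rightarrow> complex set" where
  "OF d = {of_int a + of_int b * omegaF d | a b. True}"

text \<open>Inverse different delta.\<close>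
definition deltaF :: "int \<Rightarrow> complex" where
  "deltaF d = (if d mod 4 = 1 then 1 / sqrtd d else 1 / (2 * sqrtd d))"

definition unitsOF :: "int \<Rightarrow> complex set" where
  "unitsOF d = {u \<in> OF d. \<exists>v \<in> OF d. u * v = 1}"

section \<open>Hermitian lattice Lambda = O_F^m (free), form given by a Gram matrix A\<close>

definition lattice :: "int \<Rightarrow> (complex^'m) set" where
  "lattice d = {x. \<forall>i. x $ i \<in> OF d}"

definition herm :: "complex^'m^'m \<Rightarrow> complex^'m \<Rightarrow> complex^'m \<Rightarrow> complex" where
  "herm A x y = (\<Sum>i\<in>UNIV. \<Sum>j\<in>UNIV. x $ i * A $ i $ j * cnj (y $ j))"

definition hermitian_mat :: "complex^'m^'m \<Rightarrow> bool" where
  "hermitian_mat A \<longleftrightarrow> (\<forall>i j. A $ i $ j = cnj (A $ j $ i))"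

definition herm_lattice :: "int \<Rightarrow> complex^'m^'m \<Rightarrow> bool" where
  "herm_lattice d A \<longleftrightarrow> hermitian_mat A \<and>
     (\<forall>x\<in>lattice d. \<forall>y\<in>lattice d. herm A x y \<in> (\<lambda>z. deltaF d * z) ` OF d)"

definition conj_transpose :: "complex^'m^'n \<Rightarrow> complex^'n^'m" where
  "conj_transpose P = (\<chi> i j. cnj (P $ j $ i))"

text \<open>Signature (1,n) with n = CARD('m) - 1 (Sylvester normal form diag(1,-1,...,-1)).\<close>
definition signature_1n :: "complex^'m^'m \<Rightarrow> bool" where
  "signature_1n A \<longleftrightarrow> (\<exists>(P::complex^'m^'m) i0. invertible P \<and>
     (\<forall>i j. (conj_transpose P ** A ** P) $ i $ j =
              (if i = j then (if i = i0 then 1 else -1) else 0)))"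

definition primitive_OF :: "int \<Rightarrow> complex^'m \<Rightarrow> bool" where
  "primitive_OF d r \<longleftrightarrow> r \<noteq> 0 \<and> (\<forall>c::complex. c *s r \<in> lattice d \<longrightarrow> c \<in> OF d)"

text \<open>y is primitive in Lambda_Q (as Z-module, same underlying set as Lambda).\<close>
definition primitive_Z :: "int \<Rightarrow> complex^'m \<Rightarrow> bool" where
  "primitive_Z d y \<longleftrightarrow> y \<noteq> 0 \<and>
     (\<forall>c::real. complex_of_real c *s y \<in> lattice d \<longrightarrow> c \<in> \<int>)"

text \<open>D_Lambda, as the cone of representatives in C^m (projectivisation implicit).\<close>
definition DLam :: "complex^'m^'m \<Rightarrow> (complex^'m) set" where
  "DLam A = {v. 0 < Re (herm A v v)}"

definition Hdiv :: "complex^'m^'m \<Rightarrow> complex^'m \<Rightarrow> (complex^'m) set" where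
  "Hdiv A r = {v \<in> DLam A. herm A v r = 0}"

text \<open>Lambda_Q tensor C is modelled as pairs (a,b) of vectors in C^m: the real point of
  x \<in> C^m = Lambda tensor R is (Re x, Im x).  QB is the C-bilinear extension of
  Tr_{F/Q} herm (i.e. of 2 Re herm).\<close>
definition realpt :: "complex^'m \<Rightarrow> (complex^'m) \<times> (complex^'m)" where
  "realpt x = ((\<chi> i. complex_of_real (Re (x $ i))), (\<chi> i. complex_of_real (Im (x $ i))))"

definition QB :: "complex^'m^'m \<Rightarrow> (complex^'m) \<times> (complex^'m) \<Rightarrow> (complex^'m) \<times> (complex^'m) \<Rightarrow> complex" where
  "QB A p q = (let (a, b) = p; (c, e) = q in
     (\<Sum>i\<in>UNIV. \<Sum>j\<in>UNIV. (a $ i + \<i> * b $ i) * A $ i $ j * (c $ j - \<i> * e $ j))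
   + (\<Sum>i\<in>UNIV. \<Sum>j\<in>UNIV. (a $ i - \<i> * b $ i) * cnj (A $ i $ j) * (c $ j + \<i> * e $ j)))"

definition cnjp :: "(complex^'m) \<times> (complex^'m) \<Rightarrow> (complex^'m) \<times> (complex^'m)" where
  "cnjp p = ((\<chi> i. cnj (fst p $ i)), (\<chi> i. cnj (snd p $ i)))"

definition iota :: "complex^'m \<Rightarrow> (complex^'m) \<times> (complex^'m)" where
  "iota v = ((1/2) *s v, (- \<i> / 2) *s v)"

definition ConeQ :: "complex^'m^'m \<Rightarrow> ((complex^'m) \<times> (complex^'m)) set" where
  "ConeQ A = {w. QB A w w = 0 \<and> Im (QB A w (cnjp w)) = 0 \<and> 0 < Re (QB A w (cnjp w))}"

definition DQ :: "complex^'m^'m \<Rightarrow> ((complex^'m) \<times> (complex^'m)) set" where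
  "DQ A = \<Union> {connected_component_set (ConeQ A) w | w. w \<in> iota ` DLam A}"

definition HQ :: "complex^'m^'m \<Rightarrow> (complex^'m) \<times> (complex^'m) \<Rightarrow> ((complex^'m) \<times> (complex^'m)) set" where
  "HQ A r' = {w \<in> DQ A. QB A w r' = 0}"

definition vanishes_simply :: "(complex^'m \<Rightarrow> complex) \<Rightarrow> (complex^'m) set \<Rightarrow> bool" where
  "vanishes_simply g S \<longleftrightarrow> (\<forall>v\<in>S. g v = 0 \<and>
      (\<exists>g'. (g has_derivative g') (at v) \<and> (\<exists>u. g' u \<noteq> 0)))"

end

theory Submission
  imports Defs
begin

text \<open>
  Since \<langle>r,r\<rangle> < 0 and the signature is (1,n), the positive vectors of r^\<bottom> span r^\<bottom>. Hence if
  \<langle>v,y\<rangle> = 0 for all v in H(r), then y is orthogonal to r^\<bottom> and, by nondegeneracy, y = c r.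
  Primitivity of r forces c \<in> O_F, and (y,y) = (r,r) forces |c| = 1, so the vectors y in question
  are exactly the unit multiples of r.

  Write a point w of \<Lambda>_Q \<otimes> \<complex> by its components p, q in the two eigenspaces of
  multiplication by i; then (w,y) = \<langle>p,y\<rangle> + conj \<langle>conj q,y\<rangle>. This shows that y and -y give the
  same divisor, and for units a, b with a^2 \<noteq> b^2 it lets us write down a point of the cone, joined
  to \<iota>(D_\<Lambda>) by a segment inside the cone, that lies on the divisor of a r but not on that of b r.
  So the divisors correspond to O_F^\<times>/{1,-1}. Finally (\<iota> v, r) = \<langle>v,r\<rangle> is a linear form with
  nonzero differential because \<langle>r,r\<rangle> \<noteq> 0, which gives (ii).
\<close>

section \<open>Hermitian forms\<close>

definition vec_cnj :: "complex^'n \<Rightarrow> complex^'n" where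
  "vec_cnj x = (\<chi> i. cnj (x $ i))"

lemma vec_cnj_nth [simp]: "vec_cnj x $ i = cnj (x $ i)"
  by (simp add: vec_cnj_def)

lemma vec_cnj_zero [simp]: "vec_cnj 0 = 0"
  by (simp add: vec_eq_iff)

lemma vec_cnj_vec_cnj [simp]: "vec_cnj (vec_cnj x) = x"
  by (simp add: vec_eq_iff)

lemma vec_cnj_eq_0_iff [simp]: "vec_cnj x = 0 \<longleftrightarrow> x = 0"
  by (simp add: vec_eq_iff)

lemma herm_zero_left [simp]: "herm A 0 z = 0"
  by (simp add: herm_def)

lemma herm_zero_right [simp]: "herm A z 0 = 0"
  by (simp add: herm_def)

lemma herm_add_left: "herm A (x + y) z = herm A x z + herm A y z"
  by (simp add: herm_def distrib_right sum.distrib)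

lemma herm_add_right: "herm A z (x + y) = herm A z x + herm A z y"
  by (simp add: herm_def distrib_left sum.distrib)

lemma herm_diff_left: "herm A (x - y) z = herm A x z - herm A y z"
  by (simp add: herm_def left_diff_distrib sum_subtractf)

lemma herm_diff_right: "herm A z (x - y) = herm A z x - herm A z y"
  by (simp add: herm_def right_diff_distrib sum_subtractf)

lemma herm_scale_left: "herm A (c *s x) z = c * herm A x z"
  by (simp add: herm_def sum_distrib_left mult.assoc)

lemma herm_scale_right: "herm A z (c *s x) = cnj c * herm A z x"
  by (simp add: herm_def sum_distrib_left mult_ac)

lemmas herm_sesquilinear =
  herm_add_left herm_add_right herm_diff_left herm_diff_right herm_scale_left herm_scale_right

lemma cnj_herm:
  assumes "hermitian_mat A"
  shows "cnj (herm A x y) = herm A y x"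
proof -
  have A: "cnj (A $ i $ j) = A $ j $ i" for i j
    using assms[unfolded hermitian_mat_def, rule_format, of j i] by simp
  have "cnj (herm A x y) = (\<Sum>i\<in>UNIV. \<Sum>j\<in>UNIV. y $ j * A $ j $ i * cnj (x $ i))"
    by (simp add: herm_def cnj_sum A mult_ac)
  also have "\<dots> = herm A y x"
    unfolding herm_def by (rule sum.swap)
  finally show ?thesis .
qed

lemma Im_herm_self:
  assumes "hermitian_mat A"
  shows "Im (herm A x x) = 0"
  using cnj_herm[OF assms, of x x] by (metis Reals_cnj_iff complex_is_Real_iff)

lemma herm_self_real:
  assumes "hermitian_mat A"
  shows "herm A x x = of_real (Re (herm A x x))"
  using Im_herm_self[OF assms] by (simp add: complex_eq_iff)

lemma conj_transpose_congruence_nth: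
  fixes A P :: "complex^'n^'n"
  shows "(conj_transpose P ** A ** P) $ i $ j = herm A (vec_cnj (column i P)) (vec_cnj (column j P))"
  by (simp add: matrix_matrix_mult_def conj_transpose_def herm_def column_def
      sum_distrib_left sum_distrib_right mult_ac) (subst sum.swap, rule refl)

lemma signature_1n_positive_vector:
  fixes A :: "complex^'n^'n"
  assumes "signature_1n A"
  obtains p where "0 < Re (herm A p p)"
proof -
  obtain P :: "complex^'n^'n" and i0 where
    "\<forall>i j. (conj_transpose P ** A ** P) $ i $ j = (if i = j then (if i = i0 then 1 else -1) else 0)"
    using assms unfolding signature_1n_def by blast
  then have "herm A (vec_cnj (column i0 P)) (vec_cnj (column i0 P)) = 1"
    by (simp add: conj_transpose_congruence_nth)
  then show ?thesis by (intro that[of "vec_cnj (column i0 P)"]) simp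
qed

lemma signature_1n_invertible:
  fixes A :: "complex^'n^'n"
  assumes "signature_1n A"
  shows "invertible A"
proof -
  obtain P :: "complex^'n^'n" and i0 where
    D: "\<forall>i j. (conj_transpose P ** A ** P) $ i $ j = (if i = j then (if i = i0 then 1 else -1) else 0)"
    using assms unfolding signature_1n_def by blast
  have "det (conj_transpose P ** A ** P) = (\<Prod>i\<in>UNIV. if i = i0 then 1 else -1)"
    using D by (subst det_diagonal) auto
  also have "\<dots> \<noteq> 0"
    by (simp add: prod_zero_iff)
  finally show ?thesis
    by (simp add: det_mul invertible_det_nz)
qed

lemma herm_eq_sum_matrix_vector:
  "herm A z y = (\<Sum>i\<in>UNIV. z $ i * (A *v vec_cnj y) $ i)"
  by (simp add: herm_def matrix_vector_mult_def sum_distrib_left mult.assoc)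

lemma herm_nondegenerate:
  assumes "invertible A" and "\<And>z. herm A z y = 0"
  shows "y = 0"
proof -
  have "(A *v vec_cnj y) $ i = 0" for i
    using assms(2)[of "axis i 1"]
    by (simp add: herm_eq_sum_matrix_vector axis_def mult_delta_left)
  then have "A *v vec_cnj y = 0"
    by (simp add: vec_eq_iff)
  moreover have "\<exists>B. B ** A = mat 1"
    using assms(1) invertible_left_inverse by blast
  ultimately have "vec_cnj y = 0"
    using matrix_left_invertible_ker[of A] by blast
  then show ?thesis
    by simp
qed

section \<open>The orthogonal complement of a negative vector\<close>

lemma exists_quadratic_positive:
  fixes a b c :: real
  assumes "0 < a"
  shows "\<exists>x. 0 < a * x\<^sup>2 + b * x + c"
proof
  define x where "x = 1 + (\<bar>b\<bar> + \<bar>c\<bar>) / a"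
  have x1: "1 \<le> x"
    using assms by (simp add: x_def)
  have ax: "a * x = a + \<bar>b\<bar> + \<bar>c\<bar>"
    using assms by (simp add: x_def field_simps)
  have "a * x\<^sup>2 + b * x + c = x * (a * x) + b * x + c"
    by (simp add: power2_eq_square mult_ac)
  also have "\<dots> = x * a + x * (\<bar>b\<bar> + b) + (x * \<bar>c\<bar> + c)"
    unfolding ax by (simp add: algebra_simps)
  finally have "a * x\<^sup>2 + b * x + c = x * a + x * (\<bar>b\<bar> + b) + (x * \<bar>c\<bar> + c)" .
  moreover have "0 < x * a" and "0 \<le> x * (\<bar>b\<bar> + b)"
    using x1 assms by simp_all
  moreover have "\<bar>c\<bar> \<le> x * \<bar>c\<bar>"
    using mult_right_mono[OF x1, of "\<bar>c\<bar>"] by simp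
  ultimately show "0 < a * x\<^sup>2 + b * x + c"
    by linarith
qed

lemma herm_orthogonal_projection:
  assumes "herm A r r \<noteq> 0"
  shows "herm A (z - (herm A z r / herm A r r) *s r) r = 0"
  using assms by (simp add: herm_diff_left herm_scale_left)

lemma Re_herm_orthogonal_projection_ge:
  fixes p r :: "complex^'n"
  assumes "hermitian_mat A" and "Re (herm A r r) < 0"
  defines "p' \<equiv> p - (herm A p r / herm A r r) *s r"
  shows "Re (herm A p p) \<le> Re (herm A p' p')"
proof -
  define n where "n = Re (herm A r r)"
  have n: "herm A r r = of_real n"
    using herm_self_real[OF assms(1)] by (simp add: n_def)
  have "herm A p' r = 0"
    using assms(2) by (auto simp: p'_def intro: herm_orthogonal_projection)
  then have "herm A p' p' = herm A p p - herm A p r * cnj (herm A p r) / of_real n"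
    using cnj_herm[OF assms(1), of p r] by (simp add: p'_def herm_sesquilinear n)
  also have "\<dots> = herm A p p - of_real ((cmod (herm A p r))\<^sup>2 / n)"
    by (simp only: complex_norm_square[symmetric] of_real_divide)
  finally have "Re (herm A p' p') = Re (herm A p p) - (cmod (herm A p r))\<^sup>2 / n"
    by simp
  moreover have "(cmod (herm A p r))\<^sup>2 / n \<le> 0"
    using assms(2) by (simp add: n_def divide_nonneg_neg)
  ultimately show ?thesis
    by simp
qed

lemma exists_orthogonal_with_large_norm:
  assumes "hermitian_mat A" and "signature_1n A" and "Re (herm A r r) < 0"
  obtains p where "herm A p r = 0" and "K < Re (herm A p p)"
proof -
  obtain p0 where "0 < Re (herm A p0 p0)"
    using signature_1n_positive_vector[OF assms(2)] by blast
  define p where "p = p0 - (herm A p0 r / herm A r r) *s r"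
  have pr: "herm A p r = 0"
    using assms(3) by (auto simp: p_def intro: herm_orthogonal_projection)
  have P: "0 < Re (herm A p p)"
    using Re_herm_orthogonal_projection_ge[OF assms(1,3), of p0] \<open>0 < Re (herm A p0 p0)\<close>
    by (simp add: p_def)
  define l where "l = sqrt ((\<bar>K\<bar> + 1) / Re (herm A p p))"
  have "l * l * Re (herm A p p) = \<bar>K\<bar> + 1"
    using P by (simp add: l_def)
  then have "K < Re (herm A (of_real l *s p) (of_real l *s p))"
    by (simp add: herm_scale_left herm_scale_right)
  moreover have "herm A (of_real l *s p) r = 0"
    by (simp add: herm_scale_left pr)
  ultimately show ?thesis
    using that by blast
qed

lemma orthogonal_to_positive_perp_imp_multiple:
  assumes h: "hermitian_mat A" and sig: "signature_1n A" and neg: "Re (herm A r r) < 0"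
    and perp: "\<And>v. 0 < Re (herm A v v) \<Longrightarrow> herm A v r = 0 \<Longrightarrow> herm A v y = 0"
  shows "y = (herm A y r / herm A r r) *s r"
proof -
  have rr: "herm A r r \<noteq> 0"
    using neg by auto
  obtain p where pr: "herm A p r = 0" and P: "0 < Re (herm A p p)"
    using exists_orthogonal_with_large_norm[OF h sig neg, of 0] by blast
  have perp_all: "herm A x y = 0" if xr: "herm A x r = 0" for x
  proof -
    \<comment> \<open>Adding a large multiple of p makes x positive while keeping it orthogonal to r.\<close>
    obtain l where l: "0 < Re (herm A p p) * l\<^sup>2 + 2 * Re (herm A p x) * l + Re (herm A x x)"
      using exists_quadratic_positive[OF P] by blast
    define v where "v = of_real l *s p + x"
    have "Re (herm A v v) = Re (herm A p p) * l\<^sup>2 + 2 * Re (herm A p x) * l + Re (herm A x x)"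
      using cnj_herm[OF h, of p x, symmetric]
      by (simp add: v_def herm_sesquilinear power2_eq_square algebra_simps)
    moreover have "herm A v r = 0"
      by (simp add: v_def herm_sesquilinear pr xr)
    ultimately have "herm A v y = 0"
      using l perp by simp
    then show ?thesis
      using perp[OF P pr] by (simp add: v_def herm_sesquilinear)
  qed
  define c where "c = herm A y r / herm A r r"
  have "herm A z (y - c *s r) = 0" for z
  proof -
    have "herm A z y = herm A z r / herm A r r * herm A r y"
      using perp_all[OF herm_orthogonal_projection[OF rr, of z]] by (simp add: herm_sesquilinear)
    moreover have "cnj c = herm A r y / herm A r r"
      using cnj_herm[OF h, of y r] cnj_herm[OF h, of r r] by (simp add: c_def)
    ultimately show ?thesis
      by (simp add: herm_sesquilinear)
  qed
  then have "y - c *s r = 0"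
    by (rule herm_nondegenerate[OF signature_1n_invertible[OF sig]])
  then show ?thesis
    by (simp add: c_def)
qed

section \<open>The period domain of the associated quadratic lattice\<close>

text \<open>
  A point of \<Lambda>_Q \<otimes> \<complex> is a pair (a, b) of vectors in \<complex>^m, and eigen_pair p q is the point with
  a + i b = p and a - i b = q: p and q are its components in the +i and -i eigenspaces of
  multiplication by i.
\<close>

definition eigen_pair :: "complex^'n \<Rightarrow> complex^'n \<Rightarrow> (complex^'n) \<times> (complex^'n)" where
  "eigen_pair p q = ((1/2) *s (p + q), (- \<i>/2) *s (p - q))"

lemma eigen_pair_cases:
  obtains p q where "w = eigen_pair p q"
proof
  show "w = eigen_pair (fst w + \<i> *s snd w) (fst w - \<i> *s snd w)"
    by (cases w) (simp add: eigen_pair_def vec_eq_iff field_simps)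
qed

lemma QB_eigen_pair:
  "QB A (eigen_pair p q) (eigen_pair p' q') = herm A p (vec_cnj q') + cnj (herm A (vec_cnj q) p')"
  by (simp add: QB_def eigen_pair_def herm_def cnj_sum field_simps)

lemma realpt_eq_eigen_pair: "realpt y = eigen_pair y (vec_cnj y)"
  by (simp add: realpt_def eigen_pair_def vec_eq_iff field_simps complex_eq_iff)

lemma iota_eq_eigen_pair: "iota v = eigen_pair v 0"
  by (simp add: iota_def eigen_pair_def)

lemma cnjp_eigen_pair: "cnjp (eigen_pair p q) = eigen_pair (vec_cnj q) (vec_cnj p)"
  by (simp add: cnjp_def eigen_pair_def vec_eq_iff field_simps complex_eq_iff)

lemma QB_eigen_pair_realpt:
  "QB A (eigen_pair p q) (realpt y) = herm A p y + cnj (herm A (vec_cnj q) y)"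
  by (simp add: realpt_eq_eigen_pair QB_eigen_pair)

lemma QB_iota_realpt: "QB A (iota v) (realpt y) = herm A v y"
  by (simp add: iota_eq_eigen_pair QB_eigen_pair_realpt)

lemma QB_realpt_realpt:
  assumes "hermitian_mat A"
  shows "QB A (realpt y) (realpt y) = 2 * herm A y y"
  using cnj_herm[OF assms, of y y] by (simp add: realpt_eq_eigen_pair QB_eigen_pair)

lemma QB_realpt_uminus: "QB A w (realpt (- y)) = - QB A w (realpt y)"
proof -
  obtain p q where "w = eigen_pair p q" by (rule eigen_pair_cases)
  moreover have "herm A x (- y) = - herm A x y" for x
    using herm_scale_right[of A x "-1" y] by (simp add: vec_eq_iff)
  ultimately show ?thesis by (simp add: QB_eigen_pair_realpt)
qed

lemma scaleR_eq_of_real_smult: "t *\<^sub>R (v :: complex^'n) = of_real t *s v"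
proof -
  have "t *\<^sub>R z = of_real t * z" for z :: complex
    by (simp add: scaleR_conv_of_real)
  then show ?thesis
    by (simp add: vec_eq_iff)
qed

lemma eigen_pair_in_ConeQ:
  assumes "hermitian_mat A" and "herm A p u = 0" and "0 < Re (herm A p p) + Re (herm A u u)"
  shows "eigen_pair p (vec_cnj u) \<in> ConeQ A"
  using assms cnj_herm[OF assms(1), of p u] Im_herm_self[OF assms(1)]
  by (simp add: ConeQ_def QB_eigen_pair cnjp_eigen_pair)

lemma iota_in_DQ:
  assumes "hermitian_mat A" and "v \<in> DLam A"
  shows "iota v \<in> DQ A"
proof -
  have "iota v \<in> ConeQ A"
    using eigen_pair_in_ConeQ[OF assms(1), of v 0] assms(2) by (simp add: iota_eq_eigen_pair DLam_def)
  then show ?thesis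
    using assms(2) unfolding DQ_def by (blast intro: connected_component_refl)
qed

lemma eigen_pair_in_DQ:
  assumes h: "hermitian_mat A" and pos: "0 < Re (herm A p p)" and pu: "herm A p u = 0"
    and cone: "0 < Re (herm A p p) + Re (herm A u u)"
  shows "eigen_pair p (vec_cnj u) \<in> DQ A"
proof -
  define g where "g t = eigen_pair p 0 + t *\<^sub>R eigen_pair 0 (vec_cnj u)" for t :: real
  have g: "g t = eigen_pair p (vec_cnj (of_real t *s u))" for t
    by (simp add: g_def eigen_pair_def scaleR_eq_of_real_smult vec_eq_iff algebra_simps)
  have "g ` {0..1} \<subseteq> ConeQ A"
  proof (rule image_subsetI)
    fix t :: real
    assume t: "t \<in> {0..1}"
    have "0 < Re (herm A p p) + t\<^sup>2 * Re (herm A u u)"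
    proof (cases "0 \<le> Re (herm A u u)")
      case False
      have "t\<^sup>2 \<le> 1"
        using t by (simp add: power_le_one)
      then have "Re (herm A u u) \<le> t\<^sup>2 * Re (herm A u u)"
        using False by (simp add: mult_le_cancel_right1)
      then show ?thesis
        using cone by linarith
    qed (use pos in \<open>simp add: add_pos_nonneg\<close>)
    then show "g t \<in> ConeQ A"
      unfolding g using h pu
      by (intro eigen_pair_in_ConeQ) (simp_all add: herm_scale_left herm_scale_right power2_eq_square)
  qed
  moreover have "connected (g ` {0..1})"
    unfolding g_def by (intro connected_continuous_image continuous_intros) simp
  moreover have "iota p \<in> g ` {0..1}"
    by (rule rev_image_eqI[of 0]) (simp_all add: g iota_eq_eigen_pair)
  moreover have "eigen_pair p (vec_cnj u) \<in> g ` {0..1}"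
    by (rule rev_image_eqI[of 1]) (simp_all add: g)
  ultimately have "connected_component (ConeQ A) (iota p) (eigen_pair p (vec_cnj u))"
    by (blast intro: connected_componentI)
  then show ?thesis
    using pos unfolding DQ_def DLam_def by blast
qed

lemma exists_orthogonal_pair:
  assumes h: "hermitian_mat A" and sig: "signature_1n A" and neg: "Re (herm A r r) < 0"
  obtains p u where "herm A p r = herm A r r" and "herm A u r = - herm A r r"
    and "herm A p u = 0" and "0 < Re (herm A p p)" and "0 < Re (herm A p p) + Re (herm A u u)"
proof -
  define n where "n = Re (herm A r r)"
  have n: "herm A r r = of_real n"
    using herm_self_real[OF h] by (simp add: n_def)
  obtain p0 where p0r: "herm A p0 r = 0" and "- n < Re (herm A p0 p0)"
    using exists_orthogonal_with_large_norm[OF h sig neg] by blast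
  define P where "P = Re (herm A p0 p0)"
  have P: "herm A p0 p0 = of_real P"
    using herm_self_real[OF h] by (simp add: P_def)
  have "0 < P + n" and "0 < P"
    using \<open>- n < Re (herm A p0 p0)\<close> neg by (simp_all add: P_def n_def)
  have rp0: "herm A r p0 = 0"
    using cnj_herm[OF h, of p0 r] p0r by simp
  define p where "p = p0 + r"
  define u where "u = of_real (n / P) *s p0 - r"
  have "herm A p r = herm A r r" and "herm A u r = - herm A r r"
    by (simp_all add: p_def u_def herm_sesquilinear p0r)
  moreover have "herm A p u = 0"
    using \<open>0 < P\<close>
    by (simp add: p_def u_def herm_sesquilinear p0r rp0 n P flip: of_real_mult of_real_divide)
  moreover have pp: "Re (herm A p p) = P + n"
    by (simp add: p_def herm_sesquilinear p0r rp0 n P)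
  moreover have "Re (herm A u u) = n * n / P + n"
    using \<open>0 < P\<close> by (simp add: u_def herm_sesquilinear p0r rp0 n P field_simps)
  then have "Re (herm A p p) + Re (herm A u u) = (P + n)\<^sup>2 / P"
    using \<open>0 < P\<close> by (simp add: pp power2_eq_square field_simps)
  ultimately show ?thesis
    using that \<open>0 < P + n\<close> \<open>0 < P\<close> by simp
qed

lemma exists_DQ_point_QB_smult:
  assumes h: "hermitian_mat A" and sig: "signature_1n A" and neg: "Re (herm A r r) < 0"
    and tau: "tau * cnj tau = 1"
  obtains w where "w \<in> DQ A"
    and "\<And>c. QB A w (realpt (c *s r)) = herm A r r * (cnj c - c * cnj tau)"
proof -
  obtain p u where pr: "herm A p r = herm A r r" and ur: "herm A u r = - herm A r r"
    and pu: "herm A p u = 0" and "0 < Re (herm A p p)" and "0 < Re (herm A p p) + Re (herm A u u)"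
    using exists_orthogonal_pair[OF h sig neg] by blast
  moreover have "herm A (tau *s u) (tau *s u) = herm A u u"
    using tau by (simp add: herm_scale_left herm_scale_right mult.assoc[symmetric])
      (simp add: mult.commute)
  ultimately have "eigen_pair p (vec_cnj (tau *s u)) \<in> DQ A"
    by (intro eigen_pair_in_DQ[OF h]) (simp_all add: herm_scale_right)
  moreover have "QB A (eigen_pair p (vec_cnj (tau *s u))) (realpt (c *s r))
      = herm A r r * (cnj c - c * cnj tau)" for c
    using cnj_herm[OF h, of r r]
    by (simp add: QB_eigen_pair_realpt herm_scale_left herm_scale_right pr ur algebra_simps)
  ultimately show ?thesis
    using that by blast
qed

lemma HQ_unit_multiple_eq_iff:
  assumes h: "hermitian_mat A" and sig: "signature_1n A" and neg: "Re (herm A r r) < 0"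
    and a: "a * cnj a = 1" and b: "b * cnj b = 1"
  shows "HQ A (realpt (a *s r)) = HQ A (realpt (b *s r)) \<longleftrightarrow> b = a \<or> b = - a"
proof
  assume "b = a \<or> b = - a"
  moreover have "(- a) *s r = - (a *s r)"
    by (simp add: vec_eq_iff)
  ultimately show "HQ A (realpt (a *s r)) = HQ A (realpt (b *s r))"
    by (auto simp: HQ_def QB_realpt_uminus)
next
  assume eq: "HQ A (realpt (a *s r)) = HQ A (realpt (b *s r))"
  have rr: "herm A r r \<noteq> 0"
    using neg by auto
  define tau where "tau = a * a"
  have tau: "tau * cnj tau = 1"
    using a by (simp add: tau_def) (metis mult.commute mult.left_commute mult_1_right)
  obtain w where "w \<in> DQ A"
    and val: "\<And>c. QB A w (realpt (c *s r)) = herm A r r * (cnj c - c * cnj tau)"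
    using exists_DQ_point_QB_smult[OF h sig neg tau] by blast
  have "cnj a - a * cnj tau = cnj a * (1 - a * cnj a)"
    by (simp add: tau_def algebra_simps)
  then have "w \<in> HQ A (realpt (a *s r))"
    using \<open>w \<in> DQ A\<close> a by (simp add: HQ_def val)
  then have "w \<in> HQ A (realpt (b *s r))"
    using eq by simp
  then have "cnj b = b * cnj tau"
    using rr by (simp add: HQ_def val)
  then have "b * b * cnj tau = 1"
    using b by (simp add: mult.assoc)
  then have "tau = b * b * cnj tau * tau"
    by simp
  also have "\<dots> = b * b"
    using tau by (simp add: mult.assoc mult.commute)
  finally show "b = a \<or> b = - a"
    by (auto simp: tau_def square_eq_iff)
qed

section \<open>The ring of integers and its units\<close>

lemma omegaF_quadratic:
  assumes "d < 0"
  obtains m t :: int where "omegaF d * omegaF d = of_int m + of_int t * omegaF d"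
    and "cnj (omegaF d) = of_int t - omegaF d" and "Im (omegaF d) \<noteq> 0"
proof -
  define s where "s = sqrt (real_of_int (- d))"
  have s: "s * s = - real_of_int d" "s > 0"
    using assms by (simp_all add: s_def)
  show ?thesis
  proof (cases "d mod 4 = 1")
    case True
    have om: "omegaF d = Complex (1/2) (s/2)"
      using True by (simp add: omegaF_def sqrtd_def s_def complex_eq_iff)
    have "(4::int) dvd d - 1"
      using True by presburger
    then have m: "real_of_int ((d - 1) div 4) = (real_of_int d - 1) / 4"
      by (simp add: of_int_div)
    have "omegaF d * omegaF d = of_int ((d - 1) div 4) + of_int 1 * omegaF d"
      using s(1) by (simp add: om m complex_eq_iff algebra_simps diff_divide_distrib)
    moreover have "cnj (omegaF d) = of_int 1 - omegaF d"
      by (simp add: om complex_eq_iff)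
    ultimately show ?thesis
      using s(2) by (intro that) (simp_all add: om)
  next
    case False
    have "omegaF d = Complex 0 s"
      using False by (simp add: omegaF_def sqrtd_def s_def complex_eq_iff)
    then show ?thesis
      using s by (intro that[of d 0]) (simp_all add: complex_eq_iff)
  qed
qed

lemma OF_iff: "x \<in> OF d \<longleftrightarrow> (\<exists>a b. x = of_int a + of_int b * omegaF d)"
  by (auto simp: OF_def)

lemma OF_uminus:
  assumes "x \<in> OF d"
  shows "- x \<in> OF d"
proof -
  obtain a b where "x = of_int a + of_int b * omegaF d"
    using assms by (auto simp: OF_iff)
  then have "- x = of_int (- a) + of_int (- b) * omegaF d"
    by simp
  then show ?thesis
    unfolding OF_iff by blast
qed

lemma OF_mult:
  assumes "d < 0" and "x \<in> OF d" and "y \<in> OF d"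
  shows "x * y \<in> OF d"
proof -
  obtain m t where sq: "omegaF d * omegaF d = of_int m + of_int t * omegaF d"
    using omegaF_quadratic[OF assms(1)] by blast
  obtain a b a' b' where "x = of_int a + of_int b * omegaF d" and "y = of_int a' + of_int b' * omegaF d"
    using assms(2,3) by (auto simp: OF_iff)
  then have "x * y = of_int a * of_int a' + (of_int a * of_int b' + of_int a' * of_int b) * omegaF d
      + of_int b * of_int b' * (omegaF d * omegaF d)"
    by (simp add: algebra_simps)
  also have "\<dots> = of_int (a * a' + b * b' * m) + of_int (a * b' + a' * b + b * b' * t) * omegaF d"
    unfolding sq by (simp add: algebra_simps)
  finally show ?thesis
    unfolding OF_iff by blast
qed

lemma OF_cnj:
  assumes "d < 0" and "x \<in> OF d"
  shows "cnj x \<in> OF d"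
proof -
  obtain m t where c: "cnj (omegaF d) = of_int t - omegaF d"
    using omegaF_quadratic[OF assms(1)] by blast
  obtain a b where "x = of_int a + of_int b * omegaF d"
    using assms(2) by (auto simp: OF_iff)
  then have "cnj x = of_int (a + b * t) + of_int (- b) * omegaF d"
    by (simp add: c algebra_simps)
  then show ?thesis
    unfolding OF_iff by blast
qed

lemma OF_real_imp_Ints:
  assumes "d < 0" and "x \<in> OF d" and "Im x = 0"
  shows "Re x \<in> \<int>"
proof -
  obtain m t where "Im (omegaF d) \<noteq> 0"
    using omegaF_quadratic[OF assms(1)] by blast
  moreover obtain a b where x: "x = of_int a + of_int b * omegaF d"
    using assms(2) by (auto simp: OF_iff)
  ultimately have "b = 0"
    using assms(3) by simp
  then show ?thesis
    by (simp add: x)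
qed

lemma OF_norm_Ints:
  assumes "d < 0" and "x \<in> OF d"
  shows "(cmod x)\<^sup>2 \<in> \<int>"
proof -
  have "x * cnj x \<in> OF d"
    using assms by (simp add: OF_mult OF_cnj)
  moreover have "x * cnj x = of_real ((cmod x)\<^sup>2)"
    by (simp only: complex_norm_square)
  ultimately show ?thesis
    using OF_real_imp_Ints[OF assms(1), of "x * cnj x"] by simp
qed

lemma unitsOF_iff:
  assumes "d < 0"
  shows "c \<in> unitsOF d \<longleftrightarrow> c \<in> OF d \<and> c * cnj c = 1"
proof
  assume "c \<in> unitsOF d"
  then obtain v where c: "c \<in> OF d" and v: "v \<in> OF d" and "c * v = 1"
    by (auto simp: unitsOF_def)
  then have "(cmod c)\<^sup>2 * (cmod v)\<^sup>2 = 1"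
    by (metis norm_mult norm_one power_mult_distrib power_one)
  moreover obtain n k :: int where "(cmod c)\<^sup>2 = of_int n" and "(cmod v)\<^sup>2 = of_int k"
    using OF_norm_Ints[OF assms c] OF_norm_Ints[OF assms v] by (auto elim!: Ints_cases)
  ultimately have "n * k = 1"
    by (metis of_int_eq_1_iff of_int_mult)
  moreover have "n \<ge> 0"
    using \<open>(cmod c)\<^sup>2 = of_int n\<close> by (metis of_int_0_le_iff zero_le_power2)
  ultimately have "n = 1"
    using zmult_eq_1_iff[of n k] by auto
  then have "(cmod c)\<^sup>2 = 1"
    using \<open>(cmod c)\<^sup>2 = of_int n\<close> by simp
  then show "c \<in> OF d \<and> c * cnj c = 1"
    using c by (metis complex_norm_square of_real_1)
next
  assume "c \<in> OF d \<and> c * cnj c = 1"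
  then show "c \<in> unitsOF d"
    using OF_cnj[OF assms] by (auto simp: unitsOF_def)
qed

lemma unitsOF_uminus:
  assumes "c \<in> unitsOF d"
  shows "- c \<in> unitsOF d"
proof -
  obtain v where "c \<in> OF d" and "v \<in> OF d" and "c * v = 1"
    using assms by (auto simp: unitsOF_def)
  then have "- c \<in> OF d" and "- v \<in> OF d" and "- c * - v = 1"
    by (simp_all add: OF_uminus)
  then show ?thesis
    unfolding unitsOF_def by blast
qed

section \<open>Special divisors containing H(r)\<close>

lemma lattice_smult:
  assumes "d < 0" and "c \<in> OF d" and "r \<in> lattice d"
  shows "c *s r \<in> lattice d"
  using assms by (simp add: lattice_def OF_mult)

lemma unit_multiple_primitive_Z:
  assumes d: "d < 0" and r: "primitive_OF d r" and c: "c \<in> unitsOF d"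
  shows "primitive_Z d (c *s r)"
  unfolding primitive_Z_def
proof (intro conjI allI impI)
  have "c * cnj c = 1" and cO: "c \<in> OF d"
    using c unitsOF_iff[OF d] by blast+
  then show "c *s r \<noteq> 0"
    using r by (auto simp: primitive_OF_def vec_eq_iff)
  fix t :: real
  assume "complex_of_real t *s (c *s r) \<in> lattice d"
  then have "of_real t * c \<in> OF d"
    using r by (simp add: primitive_OF_def vector_smult_assoc)
  then have "of_real t * c * cnj c \<in> OF d"
    using OF_mult[OF d] OF_cnj[OF d cO] by blast
  then have "complex_of_real t \<in> OF d"
    using \<open>c * cnj c = 1\<close> by (simp add: mult.assoc)
  then show "t \<in> \<int>"
    using OF_real_imp_Ints[OF d] by fastforce
qed

lemma Hdiv_in_HQ_iff_unit_multiple: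
  assumes d: "d < 0" and h: "hermitian_mat A" and sig: "signature_1n A"
    and rL: "r \<in> lattice d" and rp: "primitive_OF d r" and neg: "Re (herm A r r) < 0"
  shows "y \<in> lattice d \<and> primitive_Z d y \<and> QB A (realpt y) (realpt y) = QB A (realpt r) (realpt r)
      \<and> iota ` Hdiv A r \<subseteq> HQ A (realpt y) \<longleftrightarrow> (\<exists>c \<in> unitsOF d. y = c *s r)"
    (is "?special \<longleftrightarrow> _")
proof
  assume special: ?special
  have "herm A v y = 0" if "0 < Re (herm A v v)" and "herm A v r = 0" for v
  proof -
    have "iota v \<in> HQ A (realpt y)"
      using special that by (auto simp: Hdiv_def DLam_def)
    then show ?thesis
      by (simp add: HQ_def QB_iota_realpt)
  qed
  then obtain c where y: "y = c *s r"
    using orthogonal_to_positive_perp_imp_multiple[OF h sig neg] by blast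
  then have "c \<in> OF d"
    using special rp by (simp add: primitive_OF_def)
  moreover have "herm A (c *s r) (c *s r) = herm A r r"
    using special by (simp add: y QB_realpt_realpt[OF h])
  then have "c * cnj c * herm A r r = herm A r r"
    by (simp add: herm_scale_left herm_scale_right mult.assoc) (simp add: mult.commute)
  then have "c * cnj c = 1"
    using neg by auto
  ultimately show "\<exists>c \<in> unitsOF d. y = c *s r"
    using y unitsOF_iff[OF d] by blast
next
  assume "\<exists>c \<in> unitsOF d. y = c *s r"
  then obtain c where c: "c \<in> unitsOF d" and y: "y = c *s r"
    by blast
  then have "c \<in> OF d" and cc: "c * cnj c = 1"
    using unitsOF_iff[OF d] by blast+
  have "iota v \<in> HQ A (realpt y)" if "v \<in> Hdiv A r" for v
    using that iota_in_DQ[OF h] by (simp add: Hdiv_def HQ_def QB_iota_realpt y herm_scale_right)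
  moreover have "QB A (realpt y) (realpt y) = QB A (realpt r) (realpt r)"
    using cc by (simp add: y QB_realpt_realpt[OF h] herm_scale_left herm_scale_right mult.assoc[symmetric])
      (simp add: mult.commute)
  ultimately show ?special
    using lattice_smult[OF d \<open>c \<in> OF d\<close> rL] unit_multiple_primitive_Z[OF d rp c] y by blast
qed

lemma card_image_two_to_one:
  assumes g: "\<And>a. a \<in> U \<Longrightarrow> g a \<in> U \<and> g a \<noteq> a"
    and F: "\<And>a b. a \<in> U \<Longrightarrow> b \<in> U \<Longrightarrow> F a = F b \<longleftrightarrow> b = a \<or> b = g a"
  shows "card (F ` U) = card U div 2"
proof -
  have fibre: "card {x \<in> U. F x = y} = 2" if y: "y \<in> F ` U" for y
  proof -
    obtain a where a: "a \<in> U" and y: "y = F a"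
      using y by blast
    have "F x = F a \<longleftrightarrow> x = a \<or> x = g a" if "x \<in> U" for x
      using F[OF a that] by auto
    then have "{x \<in> U. F x = y} = {a, g a}"
      using g[OF a] y a by auto
    then show ?thesis
      using g[OF a] by (auto simp: card_2_iff)
  qed
  show ?thesis
  proof (cases "finite U")
    case True
    have "card U = (\<Sum>y\<in>F ` U. card {x \<in> U. F x = y})"
      using sum.image_gen[OF True, of "\<lambda>_. 1" F] by (simp only: card_eq_sum)
    also have "\<dots> = 2 * card (F ` U)"
      using fibre by simp
    finally show ?thesis
      by simp
  next
    case False
    have "infinite (F ` U)"
    proof
      assume "finite (F ` U)"
      moreover have "finite {x \<in> U. F x = y}" if "y \<in> F ` U" for y
        using fibre[OF that] by (intro card_ge_0_finite) simp
      ultimately have "finite (\<Union>y\<in>F ` U. {x \<in> U. F x = y})"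
        by blast
      moreover have "U = (\<Union>y\<in>F ` U. {x \<in> U. F x = y})"
        by blast
      ultimately show False
        using False by simp
    qed
    then show ?thesis
      using False by simp
  qed
qed

lemma vanishes_simply_herm_right:
  assumes "herm A r r \<noteq> 0" and "\<And>v. v \<in> S \<Longrightarrow> herm A v r = 0"
  shows "vanishes_simply (\<lambda>v. herm A v r) S"
proof -
  have "linear (\<lambda>v. herm A v r)"
    by (rule linearI) (simp_all add: herm_add_left herm_scale_left scaleR_eq_of_real_smult scaleR_conv_of_real)
  then have "((\<lambda>v. herm A v r) has_derivative (\<lambda>v. herm A v r)) (at v)" for v
    by (simp add: linear_conv_bounded_linear bounded_linear_imp_has_derivative)
  then show ?thesis
    using assms unfolding vanishes_simply_def by blast
qed

theorem lemma3p23: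
  fixes d :: int and A :: "complex^'m^'m" and r :: "complex^'m"
  assumes "d < 0" and "squarefree d"
    and "herm_lattice d A" and "signature_1n A"
    and "r \<in> lattice d" and "primitive_OF d r" and "Re (herm A r r) < 0"
  shows "card {HQ A (realpt y) | y. y \<in> lattice d \<and> primitive_Z d y
              \<and> QB A (realpt y) (realpt y) = QB A (realpt r) (realpt r)
              \<and> iota ` Hdiv A r \<subseteq> HQ A (realpt y)} = card (unitsOF d) div 2
         \<and> {v \<in> DLam A. iota v \<in> HQ A (realpt r)} = Hdiv A r
         \<and> vanishes_simply (\<lambda>v. QB A (iota v) (realpt r)) (Hdiv A r)"
proof -
  have h: "hermitian_mat A"
    using assms(3) by (simp add: herm_lattice_def)
  have divisors: "{HQ A (realpt y) | y. y \<in> lattice d \<and> primitive_Z d y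
              \<and> QB A (realpt y) (realpt y) = QB A (realpt r) (realpt r)
              \<and> iota ` Hdiv A r \<subseteq> HQ A (realpt y)} = (\<lambda>c. HQ A (realpt (c *s r))) ` unitsOF d"
    unfolding Hdiv_in_HQ_iff_unit_multiple[OF assms(1) h assms(4-7)] by blast
  have "card ((\<lambda>c. HQ A (realpt (c *s r))) ` unitsOF d) = card (unitsOF d) div 2"
  proof (rule card_image_two_to_one)
    fix a
    assume "a \<in> unitsOF d"
    then show "- a \<in> unitsOF d \<and> - a \<noteq> a"
      using unitsOF_uminus unitsOF_iff[OF assms(1)] by force
  next
    fix a b
    assume "a \<in> unitsOF d" and "b \<in> unitsOF d"
    then show "HQ A (realpt (a *s r)) = HQ A (realpt (b *s r)) \<longleftrightarrow> b = a \<or> b = - a"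
      using HQ_unit_multiple_eq_iff[OF h assms(4,7)] unitsOF_iff[OF assms(1)] by simp
  qed
  moreover have "{v \<in> DLam A. iota v \<in> HQ A (realpt r)} = Hdiv A r"
    using iota_in_DQ[OF h] by (auto simp: HQ_def Hdiv_def QB_iota_realpt)
  moreover have "vanishes_simply (\<lambda>v. QB A (iota v) (realpt r)) (Hdiv A r)"
    unfolding QB_iota_realpt using assms(7)
    by (intro vanishes_simply_herm_right) (auto simp: Hdiv_def)
  ultimately show ?thesis
    unfolding divisors by blast
qed

end
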